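(* Let $G$ be a graph and $H$ a subgraph of $G$ with well-connected adhesion sets. Then any rooted subtree of $H$ that is normal in $H$ is also normal in $G$.
   Context: For distinct vertices $v,w$, $\kappa_H(v,w)$ denotes the largest size of a family of pairwise internally disjoint $v$–$w$ paths in $H$. For a subgraph $H \subseteq G$, an $H$-path in $G$ is a path with at least one edge whose endvertices lie in $H$ and whose edges and inner vertices lie outside $H$. $H$ has well-connected adhesion sets (in $G$) if the endvertices of every $H$-path in $G$ have infinite connectivity $\kappa_H$ in $H$. A rooted tree $T$ in a graph $K$ (tree order: $x\le y$ iff $x$ lies on the root–$y$ path in $T$) is normal in $K$ if the endvertices of every $T$-path in $K$ are comparable in the tree order. *)

theory Defs
  imports Main
begin

definition graph :: "'a set \<Rightarrow> 'a set set \<Rightarrow> bool" where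
  "graph V E \<longleftrightarrow> (\<forall>e\<in>E. \<exists>x y. x \<noteq> y \<and> x \<in> V \<and> y \<in> V \<and> e = {x, y})"

definition subgraph :: "'a set \<Rightarrow> 'a set set \<Rightarrow> 'a set \<Rightarrow> 'a set set \<Rightarrow> bool" where
  "subgraph VH EH VG EG \<longleftrightarrow> graph VH EH \<and> VH \<subseteq> VG \<and> EH \<subseteq> EG"

definition is_path :: "'a set \<Rightarrow> 'a set set \<Rightarrow> 'a list \<Rightarrow> bool" where
  "is_path V E p \<longleftrightarrow> p \<noteq> [] \<and> distinct p \<and> set p \<subseteq> V \<and>
     (\<forall>i < length p - 1. {p ! i, p ! Suc i} \<in> E)"

definition path_edges :: "'a list \<Rightarrow> 'a set set" where
  "path_edges p = {{p ! i, p ! Suc i} | i. i < length p - 1}"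

definition inner :: "'a list \<Rightarrow> 'a set" where
  "inner p = set (butlast (tl p))"

definition H_path :: "'a set \<Rightarrow> 'a set set \<Rightarrow> 'a set \<Rightarrow> 'a set set \<Rightarrow> 'a list \<Rightarrow> bool" where
  "H_path VH EH VG EG p \<longleftrightarrow> is_path VG EG p \<and> length p \<ge> 2 \<and>
     hd p \<in> VH \<and> last p \<in> VH \<and> inner p \<inter> VH = {} \<and> path_edges p \<inter> EH = {}"

(* kappa_H(v,w) is infinite: there is an infinite family of pairwise internally
   disjoint v--w paths in H. *)
definition infinitely_connected :: "'a set \<Rightarrow> 'a set set \<Rightarrow> 'a \<Rightarrow> 'a \<Rightarrow> bool" where
  "infinitely_connected V E v w \<longleftrightarrow>
     (\<exists>F. infinite F \<and> (\<forall>p\<in>F. is_path V E p \<and> hd p = v \<and> last p = w) \<and>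
          (\<forall>p\<in>F. \<forall>q\<in>F. p \<noteq> q \<longrightarrow> inner p \<inter> inner q = {}))"

definition well_connected_adhesion :: "'a set \<Rightarrow> 'a set set \<Rightarrow> 'a set \<Rightarrow> 'a set set \<Rightarrow> bool" where
  "well_connected_adhesion VH EH VG EG \<longleftrightarrow>
     (\<forall>p. H_path VH EH VG EG p \<longrightarrow> infinitely_connected VH EH (hd p) (last p))"

definition connected_graph :: "'a set \<Rightarrow> 'a set set \<Rightarrow> bool" where
  "connected_graph V E \<longleftrightarrow> (\<forall>x\<in>V. \<forall>y\<in>V. \<exists>p. is_path V E p \<and> hd p = x \<and> last p = y)"

definition is_cycle :: "'a set \<Rightarrow> 'a set set \<Rightarrow> 'a list \<Rightarrow> bool" where
  "is_cycle V E c \<longleftrightarrow> length c \<ge> 3 \<and> is_path V E c \<and> {last c, hd c} \<in> E"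

definition tree :: "'a set \<Rightarrow> 'a set set \<Rightarrow> bool" where
  "tree V E \<longleftrightarrow> graph V E \<and> V \<noteq> {} \<and> connected_graph V E \<and> \<not> (\<exists>c. is_cycle V E c)"

definition tree_le :: "'a set \<Rightarrow> 'a set set \<Rightarrow> 'a \<Rightarrow> 'a \<Rightarrow> 'a \<Rightarrow> bool" where
  "tree_le VT ET r x y \<longleftrightarrow> (\<exists>p. is_path VT ET p \<and> hd p = r \<and> last p = y \<and> x \<in> set p)"

definition normal_tree :: "'a set \<Rightarrow> 'a set set \<Rightarrow> 'a \<Rightarrow> 'a set \<Rightarrow> 'a set set \<Rightarrow> bool" where
  "normal_tree VT ET r VK EK \<longleftrightarrow>
     tree VT ET \<and> r \<in> VT \<and> subgraph VT ET VK EK \<and>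
     (\<forall>p. H_path VT ET VK EK p \<longrightarrow>
        tree_le VT ET r (hd p) (last p) \<or> tree_le VT ET r (last p) (hd p))"

end

theory Submission
  imports Defs "HOL-Library.Sublist"
begin

(* Suppose some T-path P in G had incomparable endvertices t1 and t2, and let S be the finite
   set of their common lower bounds in the tree order; P avoids S. Cutting P at its vertices in H
   splits it into edges of H and H-paths. The endvertices of an H-path are joined by infinitely
   many internally disjoint paths in H, only finitely many of which meet S, so t1 and t2 are
   joined by a path in H - S. Along any path in H, however, consecutive vertices of T are
   comparable, being joined by an edge of T or by a T-path in H, in which T is normal; and a
   chain of comparable vertices from t1 to t2 passes through a common lower bound of both. *)

lemma set_subset_ends_inner: "p \<noteq> [] \<Longrightarrow> set p \<subseteq> {hd p, last p} \<union> inner p"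
  by (cases p; cases "tl p" rule: rev_cases) (auto simp: inner_def)

lemma rtranclp_by_segments:
  assumes "w \<noteq> []" "hd w \<in> A" "last w \<in> A"
    and "\<And>x u z. sublist (x # u @ [z]) w \<Longrightarrow> x \<in> A \<Longrightarrow> z \<in> A \<Longrightarrow> set u \<inter> A = {} \<Longrightarrow> R x z"
  shows "R\<^sup>*\<^sup>* (hd w) (last w)"
  using assms
proof (induction "length w" arbitrary: w rule: less_induct)
  case less
  obtain x rest where w: "w = x # rest" using less.prems(1) by (cases w) auto
  show ?case
  proof (cases "rest = []")
    case False
    then have "\<exists>y\<in>set rest. y \<in> A" using less.prems(3) w by auto
    then obtain u z v where rest: "rest = u @ z # v" "z \<in> A" "\<forall>y\<in>set u. y \<notin> A"
      by (rule split_list_first_propE)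
    have "sublist (x # u @ [z]) w"
      using w rest sublist_append_rightI[of "x # u @ [z]" v] by simp
    then have "R x z"
      by (rule less.prems(4)) (use less.prems(2) w rest in auto)
    moreover have "R\<^sup>*\<^sup>* z (last w)"
    proof -
      have "sublist (z # v) w" using w rest sublist_append_leftI[of "z # v" "x # u"] by simp
      have "R\<^sup>*\<^sup>* (hd (z # v)) (last (z # v))"
      proof (rule less.hyps)
        show "length (z # v) < length w" using w rest by simp
        show "last (z # v) \<in> A" using less.prems(3) w rest by simp
        show "R x' z'" if "sublist (x' # u' @ [z']) (z # v)" "x' \<in> A" "z' \<in> A" "set u' \<inter> A = {}"
          for x' u' z'
          using less.prems(4) that sublist_order.order_trans[OF that(1) \<open>sublist (z # v) w\<close>]
          by blast
      qed (use rest in simp_all)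
      then show ?thesis using w rest by simp
    qed
    ultimately show ?thesis using w by (simp add: converse_rtranclp_into_rtranclp)
  qed (simp add: w)
qed

definition walk :: "'a set \<Rightarrow> 'a set set \<Rightarrow> 'a list \<Rightarrow> bool" where
  "walk V E p \<longleftrightarrow> p \<noteq> [] \<and> set p \<subseteq> V \<and> successively (\<lambda>x y. {x, y} \<in> E) p"

lemma is_path_iff_distinct_walk: "is_path V E p \<longleftrightarrow> distinct p \<and> walk V E p"
  by (auto simp: is_path_def walk_def successively_conv_nth less_diff_conv)

lemma walk_singleton [simp]: "walk V E [x] \<longleftrightarrow> x \<in> V"
  by (simp add: walk_def)

lemma walk_append_iff:
  "xs \<noteq> [] \<Longrightarrow> ys \<noteq> [] \<Longrightarrow>
    walk V E (xs @ ys) \<longleftrightarrow> walk V E xs \<and> walk V E ys \<and> {last xs, hd ys} \<in> E"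
  by (auto simp: walk_def successively_append_iff)

lemma walk_rev [simp]: "walk V E (rev p) \<longleftrightarrow> walk V E p"
  by (simp add: walk_def insert_commute)

lemma walk_sublist: "walk V E w \<Longrightarrow> sublist p w \<Longrightarrow> p \<noteq> [] \<Longrightarrow> walk V E p"
  by (auto simp: walk_def sublist_def successively_append_iff)

lemma walk_Diff_iff: "walk (V - S) E p \<longleftrightarrow> walk V E p \<and> set p \<inter> S = {}"
  by (auto simp: walk_def)

lemma walk_join:
  assumes "walk V E p" "walk V E q" "last p = hd q"
  shows "walk V E (p @ tl q)"
proof (cases "tl q = []")
  case True
  then show ?thesis using assms(1) by simp
next
  case False
  have "q = hd q # tl q" using assms(2) by (simp add: walk_def)
  then have "walk V E (tl q)" and "{hd q, hd (tl q)} \<in> E"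
    using assms(2) False walk_append_iff[of "[hd q]" "tl q"] by auto
  then show ?thesis using assms False walk_append_iff[of p "tl q"] by (auto simp: walk_def)
qed

lemma walk_imp_path:
  assumes "walk V E w"
  obtains p where "is_path V E p" "hd p = hd w" "last p = last w"
  using assms
proof (induction "length w" arbitrary: w rule: less_induct)
  case less
  show ?case
  proof (cases "distinct w")
    case True
    then show ?thesis using less.prems by (simp add: is_path_iff_distinct_walk)
  next
    case False
    then obtain xs ys zs y where w: "w = xs @ [y] @ ys @ [y] @ zs"
      using not_distinct_decomp by blast
    have "sublist (xs @ [y]) w" "sublist (y # zs) w"
      using w sublist_append_leftI[of "y # zs" "xs @ y # ys"] by auto
    then have "walk V E (xs @ [y])" "walk V E (y # zs)"
      using less.prems(2) walk_sublist by blast+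
    then have "walk V E (xs @ y # zs)"
      using walk_join by fastforce
    moreover have "length (xs @ y # zs) < length w" using w by simp
    moreover have "hd (xs @ y # zs) = hd w" "last (xs @ y # zs) = last w"
      using w by (cases xs; cases zs; simp)+
    ultimately show ?thesis using less.hyps[of "xs @ y # zs"] less.prems(1) by auto
  qed
qed

lemma rtranclp_walk_between:
  assumes "(\<lambda>x y. \<exists>q. walk V E q \<and> hd q = x \<and> last q = y)\<^sup>*\<^sup>* a b" "a \<in> V"
  shows "\<exists>q. walk V E q \<and> hd q = a \<and> last q = b"
  using assms
proof (induction rule: rtranclp_induct)
  case base
  then show ?case by (intro exI[of _ "[a]"]) simp
next
  case (step b c)
  then obtain p q where p: "walk V E p" "hd p = a" "last p = b"
    and q: "walk V E q" "hd q = b" "last q = c"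
    by blast
  then obtain q' where "q = b # q'" by (cases q) (auto simp: walk_def)
  then show ?case
    using walk_join[OF p(1) q(1)] p q by (intro exI[of _ "p @ tl q"]) (auto simp: walk_def)
qed

lemma is_path_sublist: "is_path V E w \<Longrightarrow> sublist p w \<Longrightarrow> p \<noteq> [] \<Longrightarrow> is_path V E p"
  by (auto simp: is_path_iff_distinct_walk sublist_def intro: walk_sublist)

lemma is_path_prefix: "is_path V E (xs @ ys) \<Longrightarrow> xs \<noteq> [] \<Longrightarrow> is_path V E xs"
  by (erule is_path_sublist) (auto intro: sublist_append_rightI)

lemma is_path_split_at:
  assumes "is_path V E p" "y \<in> set p"
  obtains u v where "p = u @ y # v" "is_path V E (u @ [y])" "hd (u @ [y]) = hd p"
proof -
  obtain u v where uv: "p = u @ y # v" using assms(2) by (metis split_list)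
  moreover have "is_path V E (u @ [y])"
    using assms(1) uv is_path_prefix[of V E "u @ [y]" v] by simp
  moreover have "hd (u @ [y]) = hd p" using uv by (cases u) simp_all
  ultimately show ?thesis using that by blast
qed

lemma distinct_last_Cons_eq_iff: "distinct (a # p) \<Longrightarrow> last (a # p) = a \<longleftrightarrow> p = []"
  by (metis distinct.simps(2) last.simps last_in_set)

lemma is_cycle_of_two_paths:
  assumes p: "is_path V E (a # u @ [z])" and q: "is_path V E (a # s @ [z])"
    and "set u \<inter> set s = {}" and "u \<noteq> [] \<or> s \<noteq> []"
  shows "is_cycle V E (a # u @ z # rev s)"
proof -
  let ?c = "a # u @ z # rev s"
  have "walk V E (rev (a # s @ [z]))"
    using q walk_rev[of V E "a # s @ [z]"] unfolding is_path_iff_distinct_walk by blast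
  then have "walk V E ((a # u @ [z]) @ tl (rev (a # s @ [z])))"
    using p by (intro walk_join) (auto simp: is_path_iff_distinct_walk)
  then have "walk V E (?c @ [a])" by simp
  then have "walk V E ?c" "{last ?c, hd ?c} \<in> E"
    using walk_append_iff[of ?c "[a]"] by auto
  moreover have "distinct ?c" using p q assms(3) by (auto simp: is_path_iff_distinct_walk)
  moreover have "length ?c \<ge> 3" using assms(4) by (auto simp: Suc_le_eq)
  ultimately show ?thesis by (simp add: is_cycle_def is_path_iff_distinct_walk)
qed

lemma is_cycle_of_diverging_paths:
  assumes p: "is_path V E (a # p')" and q: "is_path V E (a # q')"
    and "p' \<noteq> []" "q' \<noteq> []" "hd p' \<noteq> hd q'" "last p' = last q'"
  shows "\<exists>c. is_cycle V E c"
proof -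
  have "last p' \<in> set p'" "last p' \<in> set q'" using assms(3,4,6) last_in_set by metis+
  then have "\<exists>x\<in>set p'. x \<in> set q'" by blast
  then obtain u z v where p'_split: "p' = u @ z # v" and "z \<in> set q'"
    and u_off_q': "\<forall>y\<in>set u. y \<notin> set q'"
    by (rule split_list_first_propE)
  then obtain s t where q'_split: "q' = s @ z # t" by (metis split_list)
  have "sublist (a # u @ [z]) (a # p')" "sublist (a # s @ [z]) (a # q')"
    using p'_split q'_split sublist_append_rightI[of _ t] sublist_append_rightI[of _ v]
    by (metis append.assoc append_Cons append_Nil)+
  then have "is_path V E (a # u @ [z])" "is_path V E (a # s @ [z])"
    using p q is_path_sublist by blast+
  moreover have "u \<noteq> [] \<or> s \<noteq> []" using assms(5) p'_split q'_split by auto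
  ultimately show ?thesis
    using is_cycle_of_two_paths u_off_q' q'_split by fastforce
qed

lemma acyclic_path_unique:
  assumes "\<not> (\<exists>c. is_cycle V E c)"
  shows "is_path V E p \<Longrightarrow> is_path V E q \<Longrightarrow> hd p = hd q \<Longrightarrow> last p = last q \<Longrightarrow> p = q"
proof (induction p arbitrary: q)
  case Nil
  then show ?case by (simp add: is_path_def)
next
  case (Cons a p')
  obtain q' where q: "q = a # q'"
    using Cons.prems by (cases q) (auto simp: is_path_def)
  have "p' = [] \<longleftrightarrow> q' = []"
    using Cons.prems q distinct_last_Cons_eq_iff by (metis is_path_def)
  moreover have "p' = q'" if ne: "p' \<noteq> []" "q' \<noteq> []"
  proof -
    have p': "is_path V E p'" and q': "is_path V E q'"
      using Cons.prems q ne is_path_sublist[of V E _ "tl _"] by fastforce+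
    have "last p' = last q'" using Cons.prems(4) q ne by simp
    moreover have "hd p' = hd q'"
      using is_cycle_of_diverging_paths[OF Cons.prems(1) _ ne] Cons.prems(2) q assms calculation
      by blast
    ultimately show ?thesis using Cons.IH[OF p' q'] by simp
  qed
  ultimately show ?case using q by blast
qed

lemma tree_le_in_vertices: "tree_le V E r x y \<Longrightarrow> x \<in> V \<and> y \<in> V"
  unfolding tree_le_def is_path_def by (metis last_in_set subsetD)

lemma tree_le_iff_in_path:
  assumes "tree V E" "is_path V E p" "hd p = r"
  shows "tree_le V E r x (last p) \<longleftrightarrow> x \<in> set p"
  using assms acyclic_path_unique[of V E _ p] unfolding tree_def tree_le_def by metis

lemma tree_le_on_path:
  assumes "tree V E" "is_path V E p" "hd p = r" "y \<in> set p" "tree_le V E r x y"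
  shows "x \<in> set p"
proof -
  obtain u v where "p = u @ y # v" "is_path V E (u @ [y])" "hd (u @ [y]) = r"
    using is_path_split_at assms(2-4) by metis
  then show ?thesis using tree_le_iff_in_path[OF assms(1)] assms(5) by fastforce
qed

lemma tree_le_refl: "tree V E \<Longrightarrow> r \<in> V \<Longrightarrow> x \<in> V \<Longrightarrow> tree_le V E r x x"
  unfolding tree_def connected_graph_def tree_le_def by (metis is_path_def last_in_set)

lemma tree_le_trans: "tree V E \<Longrightarrow> tree_le V E r x y \<Longrightarrow> tree_le V E r y z \<Longrightarrow> tree_le V E r x z"
  using tree_le_on_path unfolding tree_le_def by metis

lemma tree_le_below_comparable:
  assumes "tree V E" "tree_le V E r a c" "tree_le V E r b c"
  shows "tree_le V E r a b \<or> tree_le V E r b a"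
proof -
  obtain p where p: "is_path V E p" "hd p = r" "last p = c" "a \<in> set p"
    using assms(2) unfolding tree_le_def by blast
  have "b \<in> set p" using tree_le_iff_in_path[OF assms(1) p(1,2)] assms(3) p(3) by blast
  obtain u v where uv: "p = u @ a # v" "is_path V E (u @ [a])" "hd (u @ [a]) = r"
    using is_path_split_at p by metis
  show ?thesis
  proof (cases "b \<in> set (u @ [a])")
    case True
    then show ?thesis using uv unfolding tree_le_def by fastforce
  next
    case False
    then obtain v1 v2 where "p = (u @ a # v1) @ [b] @ v2"
      using \<open>b \<in> set p\<close> uv by (auto simp: in_set_conv_decomp)
    then have "is_path V E ((u @ a # v1) @ [b])" "hd ((u @ a # v1) @ [b]) = r"
      using p is_path_prefix[of V E "(u @ a # v1) @ [b]" v2] by (simp_all, cases u, simp_all)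
    then show ?thesis unfolding tree_le_def by force
  qed
qed

lemma tree_le_edge:
  assumes "tree V E" "r \<in> V" "{x, y} \<in> E" "x \<in> V" "y \<in> V"
  shows "tree_le V E r x y \<or> tree_le V E r y x"
proof -
  obtain p where p: "is_path V E p" "hd p = r" "last p = x"
    using assms unfolding tree_def connected_graph_def by blast
  show ?thesis
  proof (cases "y \<in> set p")
    case True
    then show ?thesis using p unfolding tree_le_def by blast
  next
    case False
    then have "is_path V E (p @ [y])"
      using p assms(3,5) walk_append_iff[of p "[y]" V E] by (auto simp: is_path_iff_distinct_walk walk_def)
    moreover have "hd (p @ [y]) = r" "x \<in> set (p @ [y])"
      using p by (auto simp: is_path_def)
    ultimately show ?thesis unfolding tree_le_def by force
  qed
qed

lemma finite_tree_le_below: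
  assumes "tree V E"
  shows "finite {x. tree_le V E r x y}"
proof (cases "{x. tree_le V E r x y} = {}")
  case False
  then obtain p where "is_path V E p" "hd p = r" "last p = y" unfolding tree_le_def by blast
  then have "{x. tree_le V E r x y} = set p" using tree_le_iff_in_path[OF assms] by blast
  then show ?thesis by simp
qed simp

lemma tree_le_common_lower_bound_of_chain:
  assumes "tree V E" "r \<in> V" "a \<in> X \<inter> V"
    and "(\<lambda>x y. y \<in> X \<and> (tree_le V E r x y \<or> tree_le V E r y x))\<^sup>*\<^sup>* a b"
  shows "\<exists>m\<in>X. tree_le V E r m a \<and> tree_le V E r m b"
  using assms(4)
proof (induction rule: rtranclp_induct)
  case base
  then show ?case using assms(1-3) tree_le_refl by fast
next
  case (step b c)
  then obtain m where m: "m \<in> X" "tree_le V E r m a" "tree_le V E r m b" by blast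
  consider "tree_le V E r b c" | "tree_le V E r c b" using step.hyps(2) by blast
  then show ?case
  proof cases
    case 1
    then show ?thesis using m tree_le_trans[OF assms(1)] by blast
  next
    case 2
    then consider "tree_le V E r m c" | "tree_le V E r c m"
      using tree_le_below_comparable[OF assms(1) m(3)] by blast
    then show ?thesis
    proof cases
      case 2
      have "tree_le V E r c a" using tree_le_trans[OF assms(1) 2 m(2)] .
      moreover have "tree_le V E r c c"
        using tree_le_in_vertices[OF 2] tree_le_refl[OF assms(1,2)] by blast
      ultimately show ?thesis using step.hyps(2) by blast
    qed (use m in blast)
  qed
qed

lemma path_edges_Cons_snoc:
  assumes "e \<in> path_edges (x # u @ [z])"
  shows "(u = [] \<and> e = {x, z}) \<or> e \<inter> set u \<noteq> {}"
proof -
  let ?p = "x # u @ [z]"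
  obtain i where i: "i < Suc (length u)" "e = {?p ! i, ?p ! Suc i}"
    using assms by (auto simp: path_edges_def)
  show ?thesis
  proof (cases i)
    case 0
    then show ?thesis using i by (cases u) auto
  next
    case (Suc j)
    then have "?p ! i = u ! j" "j < length u" using i(1) by (simp_all add: nth_append)
    then show ?thesis using i(2) by auto
  qed
qed

lemma H_path_of_segment:
  assumes "graph VH EH" "is_path VG EG (x # u @ [z])" "x \<in> VH" "z \<in> VH"
    and "set u \<inter> VH = {}" "\<not> (u = [] \<and> {x, z} \<in> EH)"
  shows "H_path VH EH VG EG (x # u @ [z])"
proof -
  have "e \<notin> EH" if "e \<in> path_edges (x # u @ [z])" for e
  proof
    assume "e \<in> EH"
    then have "e \<subseteq> VH" using assms(1) by (auto simp: graph_def)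
    then show False using path_edges_Cons_snoc[OF that] assms(5,6) \<open>e \<in> EH\<close> by blast
  qed
  then show ?thesis using assms(2-5) by (auto simp: H_path_def inner_def)
qed

lemma normal_tree_segment_comparable:
  assumes "normal_tree VT ET r VH EH" "is_path VH EH (x # u @ [z])" "x \<in> VT" "z \<in> VT"
    and "set u \<inter> VT = {}"
  shows "tree_le VT ET r x z \<or> tree_le VT ET r z x"
proof (cases "u = [] \<and> {x, z} \<in> ET")
  case True
  then show ?thesis using assms tree_le_edge by (metis normal_tree_def)
next
  case False
  then have "H_path VT ET VH EH (x # u @ [z])"
    using assms by (intro H_path_of_segment) (auto simp: normal_tree_def subgraph_def)
  then show ?thesis using assms(1) unfolding normal_tree_def by fastforce
qed

lemma normal_tree_path_meets_common_lower_bounds: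
  assumes "normal_tree VT ET r VH EH" "is_path VH EH w" "hd w \<in> VT" "last w \<in> VT"
  shows "\<exists>m\<in>set w. tree_le VT ET r m (hd w) \<and> tree_le VT ET r m (last w)"
proof -
  let ?R = "\<lambda>x y. y \<in> set w \<and> (tree_le VT ET r x y \<or> tree_le VT ET r y x)"
  have chain: "?R\<^sup>*\<^sup>* (hd w) (last w)"
  proof (rule rtranclp_by_segments)
    fix x u z assume seg: "sublist (x # u @ [z]) w" "x \<in> VT" "z \<in> VT" "set u \<inter> VT = {}"
    then have "is_path VH EH (x # u @ [z])" using assms(2) is_path_sublist by blast
    then show "?R x z"
      using seg normal_tree_segment_comparable[OF assms(1)] set_mono_sublist by fastforce
  qed (use assms in \<open>auto simp: is_path_def\<close>)
  have "tree VT ET" "r \<in> VT" using assms(1) by (simp_all add: normal_tree_def)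
  moreover have "hd w \<in> set w \<inter> VT" using assms(2,3) by (simp add: is_path_def)
  ultimately show ?thesis using tree_le_common_lower_bound_of_chain[OF _ _ _ chain] by blast
qed

lemma inner_disjoint_family_avoids_finite:
  assumes "infinite F" "\<forall>p\<in>F. \<forall>q\<in>F. p \<noteq> q \<longrightarrow> inner p \<inter> inner q = {}" "finite S"
  obtains q where "q \<in> F" "inner q \<inter> S = {}"
proof -
  have "finite {q \<in> F. s \<in> inner q}" for s
  proof (cases "{q \<in> F. s \<in> inner q} = {}")
    case False
    then obtain q where "q \<in> F" "s \<in> inner q" by blast
    then have "{q \<in> F. s \<in> inner q} \<subseteq> {q}" using assms(2) by blast
    then show ?thesis using finite_subset by blast
  qed (metis finite.emptyI)
  then have "finite {q \<in> F. inner q \<inter> S \<noteq> {}}"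
    using assms(3) by (auto intro: finite_subset[of _ "\<Union>s\<in>S. {q \<in> F. s \<in> inner q}"])
  then have "F \<noteq> {q \<in> F. inner q \<inter> S \<noteq> {}}" using assms(1) by metis
  then show ?thesis using that by blast
qed

lemma infinitely_connected_avoiding_finite:
  assumes "infinitely_connected V E x z" "finite S" "x \<notin> S" "z \<notin> S"
  obtains q where "walk (V - S) E q" "hd q = x" "last q = z"
proof -
  obtain F where F: "infinite F" "\<forall>p\<in>F. is_path V E p \<and> hd p = x \<and> last p = z"
    "\<forall>p\<in>F. \<forall>q\<in>F. p \<noteq> q \<longrightarrow> inner p \<inter> inner q = {}"
    using assms(1) unfolding infinitely_connected_def by blast
  obtain q where q: "q \<in> F" "inner q \<inter> S = {}"
    using inner_disjoint_family_avoids_finite[OF F(1,3) assms(2)] .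
  then have "walk V E q" "q \<noteq> []" "hd q = x" "last q = z"
    using F(2) by (auto simp: is_path_iff_distinct_walk walk_def)
  moreover have "set q \<inter> S = {}"
    using set_subset_ends_inner[of q] q(2) assms(3,4) calculation by auto
  ultimately show ?thesis using that walk_Diff_iff by blast
qed

lemma well_connected_adhesion_segment_avoiding_finite:
  assumes "graph VH EH" "well_connected_adhesion VH EH VG EG" "finite S"
    and "is_path VG EG (x # u @ [z])" "x \<in> VH - S" "z \<in> VH - S" "set u \<inter> VH = {}"
  shows "\<exists>q. walk (VH - S) EH q \<and> hd q = x \<and> last q = z"
proof (cases "u = [] \<and> {x, z} \<in> EH")
  case True
  then have "walk (VH - S) EH [x, z]" using assms(5,6) by (simp add: walk_def)
  then show ?thesis by force
next
  case False
  then have "H_path VH EH VG EG (x # u @ [z])"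
    using assms by (intro H_path_of_segment) auto
  then have "infinitely_connected VH EH x z"
    using assms(2) unfolding well_connected_adhesion_def by fastforce
  then show ?thesis
    using infinitely_connected_avoiding_finite assms(3,5,6) by (metis DiffD2)
qed

lemma well_connected_adhesion_reroute:
  assumes "graph VH EH" "well_connected_adhesion VH EH VG EG" "finite S"
    and "is_path VG EG p" "hd p \<in> VH" "last p \<in> VH" "set p \<inter> S = {}"
  obtains w where "is_path VH EH w" "set w \<inter> S = {}" "hd w = hd p" "last w = last p"
proof -
  have chain: "(\<lambda>x y. \<exists>q. walk (VH - S) EH q \<and> hd q = x \<and> last q = y)\<^sup>*\<^sup>* (hd p) (last p)"
  proof (rule rtranclp_by_segments)
    fix x u z assume seg: "sublist (x # u @ [z]) p" "x \<in> VH" "z \<in> VH" "set u \<inter> VH = {}"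
    have "is_path VG EG (x # u @ [z])" using is_path_sublist[OF assms(4) seg(1)] by simp
    moreover have "x \<notin> S" "z \<notin> S" using assms(7) set_mono_sublist[OF seg(1)] by auto
    ultimately show "\<exists>q. walk (VH - S) EH q \<and> hd q = x \<and> last q = z"
      using well_connected_adhesion_segment_avoiding_finite[OF assms(1-3)] seg by blast
  qed (use assms in \<open>auto simp: is_path_def\<close>)
  have "hd p \<in> VH - S" using assms(4,5,7) hd_in_set by (fastforce simp: is_path_def)
  then obtain w where w: "walk (VH - S) EH w" "hd w = hd p" "last w = last p"
    using rtranclp_walk_between[OF chain] by blast
  obtain w' where "is_path (VH - S) EH w'" "hd w' = hd p" "last w' = last p"
    using walk_imp_path[OF w(1)] w(2,3) by metis
  then show ?thesis using that unfolding is_path_iff_distinct_walk walk_Diff_iff by blast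
qed

lemma H_path_disjoint_common_lower_bounds:
  assumes "H_path VT ET VG EG p"
    and "\<not> (tree_le VT ET r (hd p) (last p) \<or> tree_le VT ET r (last p) (hd p))"
  shows "set p \<inter> {m. tree_le VT ET r m (hd p) \<and> tree_le VT ET r m (last p)} = {}"
proof -
  let ?S = "{m. tree_le VT ET r m (hd p) \<and> tree_le VT ET r m (last p)}"
  have "?S \<subseteq> VT" by (auto dest: tree_le_in_vertices)
  moreover have "hd p \<notin> ?S" "last p \<notin> ?S" using assms(2) by auto
  moreover have "p \<noteq> []" "inner p \<inter> VT = {}" using assms(1) by (auto simp: H_path_def)
  ultimately show ?thesis using set_subset_ends_inner[of p] by blast
qed

theorem lemma3p1:
  fixes VG VH VT :: "'a set" and EG EH ET :: "'a set set" and r :: 'a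
  assumes "graph VG EG"
    and "subgraph VH EH VG EG"
    and "well_connected_adhesion VH EH VG EG"
    and "subgraph VT ET VH EH" and "tree VT ET" and "r \<in> VT"
    and "normal_tree VT ET r VH EH"
  shows "normal_tree VT ET r VG EG"
proof -
  have "tree_le VT ET r (hd p) (last p) \<or> tree_le VT ET r (last p) (hd p)"
    if p: "H_path VT ET VG EG p" for p
  proof (rule ccontr)
    assume incomparable: "\<not> ?thesis"
    define S where "S = {m. tree_le VT ET r m (hd p) \<and> tree_le VT ET r m (last p)}"
    have "finite S"
      unfolding S_def using finite_tree_le_below[OF assms(5)] by (rule finite_subset[rotated]) auto
    have "set p \<inter> S = {}"
      unfolding S_def using H_path_disjoint_common_lower_bounds[OF p incomparable] .
    have "graph VH EH" "VT \<subseteq> VH" using assms(2,4) by (simp_all add: subgraph_def)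
    have ends: "hd p \<in> VT" "last p \<in> VT" and "is_path VG EG p"
      using p by (simp_all add: H_path_def)
    obtain w where w: "is_path VH EH w" "set w \<inter> S = {}" "hd w = hd p" "last w = last p"
      by (rule well_connected_adhesion_reroute[OF \<open>graph VH EH\<close> assms(3) \<open>finite S\<close>
            \<open>is_path VG EG p\<close> _ _ \<open>set p \<inter> S = {}\<close>]) (use ends \<open>VT \<subseteq> VH\<close> in auto)
    then show False
      using normal_tree_path_meets_common_lower_bounds[OF assms(7) w(1)] ends unfolding S_def by auto
  qed
  moreover have "subgraph VT ET VG EG"
    using assms(2,4) by (auto simp: subgraph_def)
  ultimately show ?thesis using assms(5,6) unfolding normal_tree_def by blast
qed

end
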